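(* Let $\alpha \in (0,1)$, $\delta \in (0,1)$, $\epsilon \in (0,1/2)$ and $N_P, N_A \in \mathbb{N}$ satisfy $N_P/N_A \le 1/2 - \epsilon$ and $N_P \ge \max\left(\log(1/\delta)/(2\epsilon^2),\, 8\log(1/\alpha)/\epsilon^2\right)$. Let $v_1,\dots,v_{N_A}$ be i.i.d. $\mathcal{N}(0,1)$ (i.e. the true mean improvement is $\mu = 0$). Then, with probability at least $1-\delta$, there exists a subset $\mathcal{D}_P \subseteq \{1,\dots,N_A\}$ with $|\mathcal{D}_P| = N_P$ such that $p_P(\hat{\mu}_P) \le \alpha$, where $\hat{\mu}_P = \frac{1}{N_P}\sum_{i\in\mathcal{D}_P} v_i$.
   Context: Setting: there are $N_A$ datasets indexed by $\{1,\dots,N_A\}$; the measured improvement of a new algorithm on dataset $i$ is $v_i$, with the $v_i$ i.i.d. $\mathcal{N}(\mu,1)$. A reporter who sees all $v_i$ may choose any subset $\mathcal{D}_P$ of size $N_P$ (depending on the $v_i$). The standard one-sided $p$-value is $p_P(\hat{\mu}_P) = \bar{\Phi}(\hat{\mu}_P\sqrt{N_P})$, where $\bar{\Phi}(x)=\int_x^\infty \frac{1}{\sqrt{2\pi}}e^{-t^2/2}\,dt$ is the standard normal survival function. *)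

theory Defs
  imports "HOL-Probability.Probability"
begin

definition Phi_bar :: "real \<Rightarrow> real" where
  "Phi_bar x = (LBINT t:{x<..}. std_normal_density t)"

definition p_value :: "nat \<Rightarrow> real \<Rightarrow> real" where
  "p_value NP mu_hat = Phi_bar (mu_hat * sqrt (real NP))"

definition iid_normals :: "nat \<Rightarrow> (nat \<Rightarrow> real) measure" where
  "iid_normals NA = PiM {1..NA} (\<lambda>_. std_normal_distribution)"

end

theory Submission
  imports Defs
begin

text \<open>
  Fix the threshold \<open>t = \<epsilon>/2\<close>. Whenever at least \<open>N\<^sub>P\<close> of the \<open>v\<^sub>i\<close> exceed \<open>t\<close>, the reporter
  takes \<open>N\<^sub>P\<close> of them: their mean is at least \<open>t\<close>, so by the Gaussian tail bound
  \<open>Phi_bar x \<le> exp (- x\<^sup>2 / 2)\<close> its \<open>p\<close>-value is at most \<open>exp (- \<epsilon>\<^sup>2 N\<^sub>P / 8) \<le> \<alpha>\<close>.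
  The number of exceedances is a sum of \<open>N\<^sub>A\<close> independent Bernoulli variables with mean
  \<open>Phi_bar t \<ge> 1/2 - t/2\<close> (the density is at most \<open>1/2\<close>), which exceeds \<open>N\<^sub>P / N\<^sub>A \<le> 1/2 - \<epsilon>\<close>
  by at least \<open>3\<epsilon>/4\<close>; by Hoeffding's inequality the count is at most \<open>N\<^sub>P\<close> with probability
  at most \<open>exp (- 9\<epsilon>\<^sup>2 N\<^sub>A / 8) \<le> \<delta>\<close>.
\<close>

lemma Phi_bar_eq_integral:
  "Phi_bar x = (\<integral>t. indicator {x<..} t * std_normal_density t \<partial>lborel)"
  unfolding Phi_bar_def set_lebesgue_integral_def by simp

lemma integrable_indicator_std_normal_density:
  "A \<in> sets borel \<Longrightarrow> integrable lborel (\<lambda>t. indicator A t * std_normal_density t)"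
  using integrable_real_mult_indicator[of A lborel std_normal_density] by (simp add: mult.commute)

lemma measure_std_normal_greaterThan: "measure std_normal_distribution {x<..} = Phi_bar x"
proof -
  have "measure std_normal_distribution {x<..} = (\<integral>t. indicator {x<..} t \<partial>std_normal_distribution)"
    by simp
  also have "\<dots> = (\<integral>t. std_normal_density t *\<^sub>R indicator {x<..} t \<partial>lborel)"
    by (rule integral_density) auto
  finally show ?thesis
    by (simp add: Phi_bar_eq_integral mult.commute)
qed

lemma Phi_bar_antimono: "x \<le> y \<Longrightarrow> Phi_bar y \<le> Phi_bar x"
  unfolding Phi_bar_eq_integral
  by (intro integral_mono integrable_indicator_std_normal_density) (auto simp: indicator_def)

lemma borel_measurable_Phi_bar [measurable]: "Phi_bar \<in> borel_measurable borel"
proof -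
  have "mono (\<lambda>x. - Phi_bar x)"
    by (auto simp: mono_def intro: Phi_bar_antimono)
  then show ?thesis
    using borel_measurable_mono borel_measurable_uminus_eq by blast
qed

lemma Phi_bar_le_exp:
  assumes "0 \<le> x"
  shows "Phi_bar x \<le> exp (- x\<^sup>2 / 2)"
proof -
  have "Phi_bar x \<le> (\<integral>t. exp (- x\<^sup>2 / 2) * normal_density x 1 t \<partial>lborel)"
    unfolding Phi_bar_eq_integral
  proof (intro integral_mono integrable_indicator_std_normal_density integrable_mult_right
      integrable_normal_density)
    fix t
    show "indicator {x<..} t * std_normal_density t \<le> exp (- x\<^sup>2 / 2) * normal_density x 1 t"
    proof (cases "x < t")
      case True
      \<comment> \<open>\<open>t\<^sup>2 = x\<^sup>2 + (t - x)\<^sup>2 + 2 x (t - x) \<ge> x\<^sup>2 + (t - x)\<^sup>2\<close>\<close>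
      have "exp (- t\<^sup>2 / 2) \<le> exp (- x\<^sup>2 / 2) * exp (- (t - x)\<^sup>2 / 2)"
        unfolding exp_add[symmetric] using True assms mult_right_mono[of x t x]
        by (simp add: power2_eq_square algebra_simps)
      with True show ?thesis
        by (simp add: std_normal_density_def normal_density_def divide_right_mono)
    qed (auto simp: normal_density_def)
  qed auto
  then show ?thesis
    by simp
qed

lemma std_normal_density_le_half: "std_normal_density x \<le> 1/2"
proof -
  have "2 \<le> sqrt (2 * pi)"
    using pi_gt3 by (simp add: real_le_rsqrt)
  then have "1 / sqrt (2 * pi) \<le> 1/2"
    by (simp add: field_simps)
  moreover have "exp (- x\<^sup>2 / 2) \<le> 1"
    by simp
  ultimately have "1 / sqrt (2 * pi) * exp (- x\<^sup>2 / 2) \<le> 1/2 * 1"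
    by (intro mult_mono) auto
  then show ?thesis
    by (simp add: std_normal_density_def)
qed

lemma has_bochner_integral_std_normal_density_atLeast_0:
  "has_bochner_integral lborel (\<lambda>x. indicator {0..} x * std_normal_density x) (1/2)"
proof -
  let ?f = "\<lambda>x. indicator {0..} x * std_normal_density x"
  have "has_bochner_integral lborel (\<lambda>x. 1 / sqrt (2 * pi) * (indicator {0..} x *\<^sub>R exp (- x\<^sup>2)))
      (1 / sqrt (2 * pi) * (sqrt pi / 2))"
    by (intro has_bochner_integral_mult_right gaussian_moment_0)
  also have "(\<lambda>x. 1 / sqrt (2 * pi) * (indicator {0..} x *\<^sub>R exp (- x\<^sup>2))) = (\<lambda>x. ?f (0 + sqrt 2 * x))"
    by (auto simp: fun_eq_iff std_normal_density_def indicator_def power_mult_distrib zero_le_mult_iff)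
  also have "1 / sqrt (2 * pi) * (sqrt pi / 2) = (1/2 :: real) /\<^sub>R \<bar>sqrt 2\<bar>"
    by (simp add: real_sqrt_mult field_simps)
  finally show ?thesis
    by (subst lborel_has_bochner_integral_real_affine_iff[of "sqrt 2" _ _ 0]) simp_all
qed

lemma Phi_bar_ge_linear:
  assumes "0 \<le> x"
  shows "1/2 - x/2 \<le> Phi_bar x"
proof -
  let ?pos = "\<lambda>t. indicator {0..} t * std_normal_density t"
  let ?box = "\<lambda>t. indicator {0..x} t * (1/2 :: real)"
  have pos: "integrable lborel ?pos" "(\<integral>t. ?pos t \<partial>lborel) = 1/2"
    using has_bochner_integral_std_normal_density_atLeast_0 by (simp_all add: has_bochner_integral_iff)
  have box: "integrable lborel ?box" "(\<integral>t. ?box t \<partial>lborel) = x/2"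
    using assms by (simp_all add: integral_indicator)
  \<comment> \<open>\<open>(x, \<infinity>) = [0, \<infinity>) - [0, x]\<close>, and on \<open>[0, x]\<close> the density is at most \<open>1/2\<close>.\<close>
  have "(\<integral>t. ?pos t - ?box t \<partial>lborel) \<le> Phi_bar x"
    unfolding Phi_bar_eq_integral
  proof (rule integral_mono)
    show "integrable lborel (\<lambda>t. ?pos t - ?box t)"
      using pos box by simp
    fix t
    show "?pos t - ?box t \<le> indicator {x<..} t * std_normal_density t"
      using std_normal_density_le_half[of t] by (auto simp: indicator_def)
  qed (simp add: integrable_indicator_std_normal_density)
  then show ?thesis
    using pos box by simp
qed

lemma indep_vars_PiM_components:
  assumes M: "\<And>i. i \<in> I \<Longrightarrow> prob_space (M i)"
  shows "prob_space.indep_vars (PiM I M) M (\<lambda>i x. x i) I"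
proof -
  interpret prob_space "PiM I M"
    using M by (rule prob_space_PiM)
  show ?thesis
  proof (cases "I = {}")
    case True
    then show ?thesis
      unfolding indep_vars_def indep_sets_def by simp
  next
    case False
    have "distr (PiM I M) (PiM I M) (\<lambda>x. restrict x I) = distr (PiM I M) (PiM I M) (\<lambda>x. x)"
      by (intro distr_cong) (auto simp: space_PiM)
    also have "\<dots> = PiM I (\<lambda>i. distr (PiM I M) (M i) (\<lambda>x. x i))"
      using M by (simp add: distr_PiM_component cong: PiM_cong)
    finally show ?thesis
      using False by (subst indep_vars_iff_distr_eq_PiM') auto
  qed
qed

lemma sum_indicator_comp_eq_card:
  "finite I \<Longrightarrow> (\<Sum>i\<in>I. indicator A (x i) :: real) = real (card {i\<in>I. x i \<in> A})"
  by (simp add: indicator_def sum.If_cases Int_def)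

lemma measure_PiM_card_hits_le:
  fixes N :: "'a measure" and I :: "'i set" and k :: nat
  assumes N: "prob_space N" and I: "finite I" "I \<noteq> {}" and A: "A \<in> sets N"
    and k: "real k \<le> real (card I) * measure N A"
  shows "measure (PiM I (\<lambda>_. N)) {x \<in> space (PiM I (\<lambda>_. N)). card {i\<in>I. x i \<in> A} \<le> k}
           \<le> exp (- 2 * (real (card I) * measure N A - real k)\<^sup>2 / real (card I))"
proof -
  let ?P = "PiM I (\<lambda>_. N)"
  define X :: "'i \<Rightarrow> ('i \<Rightarrow> 'a) \<Rightarrow> real" where "X i x = indicator A (x i)" for i x
  interpret prob_space ?P
    using N by (rule prob_space_PiM)
  have expectation_X: "expectation (X i) = measure N A" if "i \<in> I" for i
  proof -
    have "expectation (X i) = (\<integral>y. indicator A y \<partial>distr ?P N (\<lambda>x. x i))"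
      unfolding X_def using that A by (subst integral_distr) auto
    also have "\<dots> = measure N A"
      using N that A by (simp add: distr_PiM_component[of I "\<lambda>_. N"])
    finally show ?thesis .
  qed
  interpret Hoeffding_ineq ?P I X "\<lambda>_. 0" "\<lambda>_. 1" "real (card I) * measure N A"
  proof unfold_locales
    show "indep_vars (\<lambda>_. borel) X I"
      unfolding X_def using N A
      by (intro indep_vars_compose2[OF indep_vars_PiM_components]) auto
  qed (auto simp: I expectation_X X_def)
  have "(\<Sum>i\<in>I. X i x) = real (card {i\<in>I. x i \<in> A})" for x
    using I by (simp add: X_def sum_indicator_comp_eq_card)
  moreover have "(\<Sum>i\<in>I. (1 - 0 :: real)\<^sup>2) = real (card I)"
    by simp
  ultimately show ?thesis
    using Hoeffding_ineq_le[of "real (card I) * measure N A - real k"] k I by (simp add: card_gt_0_iff)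
qed

lemma sets_PiM_card_hits_le:
  assumes "finite I" "A \<in> sets N"
  shows "{x \<in> space (PiM I (\<lambda>_. N)). card {i\<in>I. x i \<in> A} \<le> k} \<in> sets (PiM I (\<lambda>_. N))"
proof -
  have "{x \<in> space (PiM I (\<lambda>_. N)). card {i\<in>I. x i \<in> A} \<le> k}
      = {x \<in> space (PiM I (\<lambda>_. N)). (\<Sum>i\<in>I. indicator A (x i) :: real) \<le> real k}"
    using assms(1) by (simp add: sum_indicator_comp_eq_card)
  also have "\<dots> \<in> sets (PiM I (\<lambda>_. N))"
    using assms(2) by measurable
  finally show ?thesis .
qed

lemma p_value_le_exp:
  assumes "0 \<le> t" "t \<le> m"
  shows "p_value n m \<le> exp (- real n * t\<^sup>2 / 2)"
proof -
  have "p_value n m \<le> Phi_bar (t * sqrt (real n))"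
    unfolding p_value_def using assms by (intro Phi_bar_antimono mult_right_mono) auto
  also have "\<dots> \<le> exp (- (t * sqrt (real n))\<^sup>2 / 2)"
    using assms by (intro Phi_bar_le_exp) auto
  finally show ?thesis
    by (simp add: power_mult_distrib mult.commute)
qed

lemma borel_measurable_p_value [measurable]: "p_value n \<in> borel_measurable borel"
  unfolding p_value_def[abs_def] by measurable

lemma obtain_subset_mean_ge:
  fixes v :: "'i \<Rightarrow> real"
  assumes "0 < k" "k \<le> card {i\<in>I. t < v i}"
  obtains D where "D \<subseteq> I" "card D = k" "t \<le> (\<Sum>i\<in>D. v i) / real k"
proof -
  obtain D where D: "D \<subseteq> {i\<in>I. t < v i}" "card D = k" "finite D"
    using assms(2) by (rule obtain_subset_with_card_n)
  have "(\<Sum>i\<in>D. t) \<le> (\<Sum>i\<in>D. v i)"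
    using D(1) by (intro sum_mono) auto
  with assms(1) D that show ?thesis
    by (auto simp: field_simps)
qed

lemma prob_space_iid_normals: "prob_space (iid_normals NA)"
  unfolding iid_normals_def by (intro prob_space_PiM prob_space_normal_density) simp

lemma borel_measurable_iid_normals_component [measurable]:
  "i \<in> {1..NA} \<Longrightarrow> (\<lambda>v. v i) \<in> borel_measurable (iid_normals NA)"
  unfolding iid_normals_def by (simp add: measurable_cong_sets[OF refl sets_density, symmetric])

lemma sets_iid_normals_selection:
  "{v \<in> space (iid_normals NA). \<exists>D \<subseteq> {1..NA}. card D = k \<and> p_value k ((\<Sum>i\<in>D. v i) / real k) \<le> \<alpha>}
     \<in> sets (iid_normals NA)"
proof -
  have "{v \<in> space (iid_normals NA). \<exists>D \<subseteq> {1..NA}. card D = k \<and> p_value k ((\<Sum>i\<in>D. v i) / real k) \<le> \<alpha>}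
      = {v \<in> space (iid_normals NA). \<exists>D \<in> {D \<in> Pow {1..NA}. card D = k}. p_value k ((\<Sum>i\<in>D. v i) / real k) \<le> \<alpha>}"
    by auto
  also have "\<dots> \<in> sets (iid_normals NA)"
  proof (intro sets.sets_Collect_finite_Ex)
    fix D assume "D \<in> {D \<in> Pow {1..NA}. card D = k}"
    then have D: "D \<subseteq> {1..NA}"
      by simp
    show "{v \<in> space (iid_normals NA). p_value k ((\<Sum>i\<in>D. v i) / real k) \<le> \<alpha>} \<in> sets (iid_normals NA)"
      by measurable (use D in auto)
  qed simp
  finally show ?thesis .
qed

lemma measure_iid_normals_card_exceedances_le:
  assumes "0 \<le> \<epsilon>" "real k \<le> (1/2 - \<epsilon>) * real NA"
  shows "measure (iid_normals NA) {v \<in> space (iid_normals NA). card {i\<in>{1..NA}. \<epsilon>/2 < v i} \<le> k}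
           \<le> exp (- 9/8 * \<epsilon>\<^sup>2 * real NA)"
proof (cases "NA = 0")
  case True
  then show ?thesis
    using prob_space.prob_le_1[OF prob_space_iid_normals] by simp
next
  case False
  have "real NA * (1/2 - \<epsilon>/4) \<le> real NA * Phi_bar (\<epsilon>/2)"
    using Phi_bar_ge_linear[of "\<epsilon>/2"] assms(1) by (intro mult_left_mono) auto
  then have gap: "3/4 * \<epsilon> * real NA \<le> real NA * Phi_bar (\<epsilon>/2) - real k"
    using assms(2) by (simp add: algebra_simps)
  moreover have "0 \<le> 3/4 * \<epsilon> * real NA"
    using assms(1) by simp
  ultimately have "real k \<le> real NA * Phi_bar (\<epsilon>/2)"
    by linarith
  have "measure (iid_normals NA) {v \<in> space (iid_normals NA). card {i\<in>{1..NA}. \<epsilon>/2 < v i} \<le> k}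
      \<le> exp (- 2 * (real NA * Phi_bar (\<epsilon>/2) - real k)\<^sup>2 / real NA)"
    using measure_PiM_card_hits_le[of std_normal_distribution "{1..NA}" "{\<epsilon>/2<..}" k]
      \<open>real k \<le> real NA * Phi_bar (\<epsilon>/2)\<close> False
    by (simp add: iid_normals_def prob_space_normal_density measure_std_normal_greaterThan)
  also have "\<dots> \<le> exp (- 2 * (3/4 * \<epsilon> * real NA)\<^sup>2 / real NA)"
    using gap assms(1) by (auto intro!: divide_right_mono power_mono)
  also have "\<dots> = exp (- 9/8 * \<epsilon>\<^sup>2 * real NA)"
    using False by (simp add: power2_eq_square)
  finally show ?thesis .
qed

lemma measure_iid_normals_selection_ge:
  assumes "0 < k" "0 \<le> t" "exp (- real k * t\<^sup>2 / 2) \<le> \<alpha>"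
  shows "1 - measure (iid_normals NA) {v \<in> space (iid_normals NA). card {i\<in>{1..NA}. t < v i} \<le> k}
    \<le> measure (iid_normals NA)
         {v \<in> space (iid_normals NA). \<exists>D \<subseteq> {1..NA}. card D = k \<and> p_value k ((\<Sum>i\<in>D. v i) / real k) \<le> \<alpha>}"
    (is "1 - measure _ ?few \<le> measure _ ?sel")
proof -
  interpret prob_space "iid_normals NA"
    by (rule prob_space_iid_normals)
  have few_compl: "space (iid_normals NA) - ?few \<subseteq> ?sel"
  proof
    fix v assume "v \<in> space (iid_normals NA) - ?few"
    then have v: "v \<in> space (iid_normals NA)" "k \<le> card {i\<in>{1..NA}. t < v i}"
      by auto
    then obtain D where D: "D \<subseteq> {1..NA}" "card D = k" "t \<le> (\<Sum>i\<in>D. v i) / real k"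
      using assms(1) by (elim obtain_subset_mean_ge)
    have "p_value k ((\<Sum>i\<in>D. v i) / real k) \<le> \<alpha>"
      using p_value_le_exp[OF assms(2) D(3), of k] assms(3) by linarith
    with v D show "v \<in> ?sel"
      by blast
  qed
  have "?few \<in> sets (iid_normals NA)"
    using sets_PiM_card_hits_le[of "{1..NA}" "{t<..}" std_normal_distribution k]
    by (simp add: iid_normals_def)
  then have "1 - measure (iid_normals NA) ?few = measure (iid_normals NA) (space (iid_normals NA) - ?few)"
    by (simp add: prob_compl)
  also have "\<dots> \<le> measure (iid_normals NA) ?sel"
    using few_compl sets_iid_normals_selection by (rule finite_measure_mono)
  finally show ?thesis .
qed

theorem theorem2:
  fixes \<alpha> \<delta> \<epsilon> :: real and NP NA :: nat
  assumes "0 < \<alpha>" "\<alpha> < 1" and "0 < \<delta>" "\<delta> < 1"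
    and "0 < \<epsilon>" "\<epsilon> < 1/2"
    and "real NP \<le> (1/2 - \<epsilon>) * real NA"
    and "real NP \<ge> max (ln (1/\<delta>) / (2 * \<epsilon>^2)) (8 * ln (1/\<alpha>) / \<epsilon>^2)"
  shows "measure (iid_normals NA)
           {v \<in> space (iid_normals NA).
              \<exists>D \<subseteq> {1..NA}. card D = NP \<and>
                 p_value NP ((\<Sum>i\<in>D. v i) / real NP) \<le> \<alpha>} \<ge> 1 - \<delta>"
proof -
  have "0 < 8 * ln (1/\<alpha>) / \<epsilon>\<^sup>2"
    using assms(1,2,5) by simp
  also have "\<dots> \<le> real NP"
    using assms(8) by simp
  finally have "0 < NP"
    by simp
  have "(1/2 - \<epsilon>) * real NA \<le> 1/2 * real NA"
    using assms(5) by (intro mult_right_mono) auto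
  with assms(7) have "2 * real NP \<le> real NA"
    by linarith
  have "ln (1/\<alpha>) \<le> real NP * (\<epsilon>/2)\<^sup>2 / 2"
    using assms(5,8) by (simp add: field_simps)
  then have significant: "exp (- real NP * (\<epsilon>/2)\<^sup>2 / 2) \<le> \<alpha>"
    using assms(1) by (simp add: ln_div flip: ln_ge_iff)
  have "ln (1/\<delta>) \<le> \<epsilon>\<^sup>2 * (2 * real NP)"
    using assms(5,8) by (simp add: field_simps)
  also have "\<dots> \<le> \<epsilon>\<^sup>2 * real NA"
    using \<open>2 * real NP \<le> real NA\<close> by (intro mult_left_mono) auto
  also have "\<dots> \<le> 9/8 * \<epsilon>\<^sup>2 * real NA"
    by simp
  finally have confident: "exp (- 9/8 * \<epsilon>\<^sup>2 * real NA) \<le> \<delta>"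
    using assms(3) by (simp add: ln_div flip: ln_ge_iff)
  show ?thesis
    using measure_iid_normals_card_exceedances_le[of \<epsilon> NP NA] confident assms(5,7)
      measure_iid_normals_selection_ge[OF \<open>0 < NP\<close> _ significant, of NA]
    by simp
qed

end
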